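(* Consider Model 2 (context). Suppose Population EM and Sample-based EM (with $n$ samples) for Model 2 are started from the same initial parameters: $\hat{\boldsymbol\mu}_1^{\langle 0\rangle}=\boldsymbol\mu_1^{\langle 0\rangle}$ and $\hat{\boldsymbol\mu}_2^{\langle 0\rangle}=\boldsymbol\mu_2^{\langle 0\rangle}$. Then for each fixed iteration $t\ge0$, $\hat{\boldsymbol\mu}_1^{\langle t\rangle}\to\boldsymbol\mu_1^{\langle t\rangle}$ and $\hat{\boldsymbol\mu}_2^{\langle t\rangle}\to\boldsymbol\mu_2^{\langle t\rangle}$ in probability as $n\to\infty$.
   Context: $\phi_d$ is the density of $N(\mathbf 0,I_d)$ (the known covariance is taken to be $I_d$). Model 2: $\boldsymbol\mu_1^*,\boldsymbol\mu_2^*\in\mathbb{R}^d$, $\mathbf Y\sim\tfrac12N(\boldsymbol\mu_1^*,I_d)+\tfrac12N(\boldsymbol\mu_2^*,I_d)$. Let $v_d(\mathbf y,\boldsymbol\mu_1,\boldsymbol\mu_2)=\frac{\phi_d(\mathbf y-\boldsymbol\mu_1)}{\phi_d(\mathbf y-\boldsymbol\mu_1)+\phi_d(\mathbf y-\boldsymbol\mu_2)}$. Population EM: $\boldsymbol\mu_1^{\langle t+1\rangle}=\frac{\mathbb{E}[v_d(\mathbf Y,\boldsymbol\mu_1^{\langle t\rangle},\boldsymbol\mu_2^{\langle t\rangle})\mathbf Y]}{\mathbb{E}[v_d(\mathbf Y,\boldsymbol\mu_1^{\langle t\rangle},\boldsymbol\mu_2^{\langle t\rangle})]}$, $\boldsymbol\mu_2^{\langle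 t+1\rangle}=\frac{\mathbb{E}[(1-v_d(\mathbf Y,\cdot))\mathbf Y]}{\mathbb{E}[1-v_d(\mathbf Y,\cdot)]}$ (with $v_d$ evaluated at $(\boldsymbol\mu_1^{\langle t\rangle},\boldsymbol\mu_2^{\langle t\rangle})$). Sample-based EM: with $\mathbf y_1,\dots,\mathbf y_n$ i.i.d. copies of $\mathbf Y$, $\hat{\boldsymbol\mu}_1^{\langle t+1\rangle}=\frac{\sum_{i=1}^n v_d(\mathbf y_i,\hat{\boldsymbol\mu}_1^{\langle t\rangle},\hat{\boldsymbol\mu}_2^{\langle t\rangle})\mathbf y_i}{\sum_{i=1}^n v_d(\mathbf y_i,\hat{\boldsymbol\mu}_1^{\langle t\rangle},\hat{\boldsymbol\mu}_2^{\langle t\rangle})}$, $\hat{\boldsymbol\mu}_2^{\langle t+1\rangle}=\frac{\sum_{i=1}^n (1-v_d(\mathbf y_i,\hat{\boldsymbol\mu}_1^{\langle t\rangle},\hat{\boldsymbol\mu}_2^{\langle t\rangle}))\mathbf y_i}{\sum_{i=1}^n (1-v_d(\mathbf y_i,\hat{\boldsymbol\mu}_1^{\langle t\rangle},\hat{\boldsymbol\mu}_2^{\langle t\rangle}))}$. *)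

theory Defs
  imports "HOL-Probability.Probability"
begin

definition phi_d :: "real ^ 'n \<Rightarrow> real" where
  "phi_d y = (2 * pi) powr (- real CARD('n) / 2) * exp (- (norm y)\<^sup>2 / 2)"

definition v_d :: "real ^ 'n \<Rightarrow> real ^ 'n \<Rightarrow> real ^ 'n \<Rightarrow> real" where
  "v_d y mu1 mu2 = phi_d (y - mu1) / (phi_d (y - mu1) + phi_d (y - mu2))"

definition model2_law :: "real ^ 'n \<Rightarrow> real ^ 'n \<Rightarrow> (real ^ 'n) measure" where
  "model2_law mu1s mu2s =
     density lborel (\<lambda>y. ennreal (1/2 * phi_d (y - mu1s) + 1/2 * phi_d (y - mu2s)))"

definition pop_em_step :: "real ^ 'n \<Rightarrow> real ^ 'n \<Rightarrow> (real ^ 'n) \<times> (real ^ 'n) \<Rightarrow> (real ^ 'n) \<times> (real ^ 'n)" where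
  "pop_em_step mu1s mu2s p =
     (case p of (m1, m2) \<Rightarrow>
       (inverse (integral\<^sup>L (model2_law mu1s mu2s) (\<lambda>y. v_d y m1 m2))
          *\<^sub>R integral\<^sup>L (model2_law mu1s mu2s) (\<lambda>y. v_d y m1 m2 *\<^sub>R y),
        inverse (integral\<^sup>L (model2_law mu1s mu2s) (\<lambda>y. 1 - v_d y m1 m2))
          *\<^sub>R integral\<^sup>L (model2_law mu1s mu2s) (\<lambda>y. (1 - v_d y m1 m2) *\<^sub>R y)))"

definition pop_em :: "real ^ 'n \<Rightarrow> real ^ 'n \<Rightarrow> (real ^ 'n) \<times> (real ^ 'n) \<Rightarrow> nat \<Rightarrow> (real ^ 'n) \<times> (real ^ 'n)" where
  "pop_em mu1s mu2s p0 t = (pop_em_step mu1s mu2s ^^ t) p0"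

definition samp_em_step :: "nat \<Rightarrow> (nat \<Rightarrow> real ^ 'n) \<Rightarrow> (real ^ 'n) \<times> (real ^ 'n) \<Rightarrow> (real ^ 'n) \<times> (real ^ 'n)" where
  "samp_em_step n ys p =
     (case p of (m1, m2) \<Rightarrow>
       (inverse (\<Sum>i<n. v_d (ys i) m1 m2) *\<^sub>R (\<Sum>i<n. v_d (ys i) m1 m2 *\<^sub>R ys i),
        inverse (\<Sum>i<n. 1 - v_d (ys i) m1 m2) *\<^sub>R (\<Sum>i<n. (1 - v_d (ys i) m1 m2) *\<^sub>R ys i)))"

definition samp_em :: "nat \<Rightarrow> (nat \<Rightarrow> real ^ 'n) \<Rightarrow> (real ^ 'n) \<times> (real ^ 'n) \<Rightarrow> nat \<Rightarrow> (real ^ 'n) \<times> (real ^ 'n)" where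
  "samp_em n ys p0 t = (samp_em_step n ys ^^ t) p0"

end

theory Submission
  imports Defs
begin

text \<open>By induction on \<open>t\<close> it suffices to show that one step of sample EM, evaluated at random
  parameters converging in probability to \<open>p\<close>, converges in probability to the population EM step
  at \<open>p\<close>. Each component of the sample step is a ratio of averages \<open>(1/n) \<Sum> c (Y i) q *\<^sub>R h (Y i)\<close>
  with weight \<open>c\<close> equal to \<open>v_d\<close> or \<open>1 - v_d\<close> and \<open>h y\<close> equal to \<open>1\<close> or \<open>y\<close>. At the fixed
  parameter \<open>p\<close> these averages converge by the weak law of large numbers, since the Gaussian
  mixture has a second moment. The weights are logistic functions of differences of squared
  distances, hence Lipschitz in the parameter with a constant linear in \<open>norm y\<close>; so moving from
  \<open>p\<close> to the random parameter costs a random Lipschitz constant of bounded expectation times the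
  parameter error. Finally the population denominators are positive, so taking ratios is
  continuous at the limit.\<close>

section \<open>Convergence in probability\<close>

text \<open>Convergence in probability in outer measure: the exceptional events need not be measurable,
  only covered by measurable sets of small measure.\<close>

definition conv_in_prob :: "'a measure \<Rightarrow> (nat \<Rightarrow> 'a \<Rightarrow> 'b::metric_space) \<Rightarrow> 'b \<Rightarrow> bool" where
  "conv_in_prob M X c \<longleftrightarrow> (\<forall>\<epsilon>>0. \<forall>\<delta>>0. \<forall>\<^sub>F n in sequentially. \<exists>A\<in>sets M.
      {\<omega>\<in>space M. \<epsilon> < dist (X n \<omega>) c} \<subseteq> A \<and> measure M A \<le> \<delta>)"

lemma conv_in_prob_const: "conv_in_prob M (\<lambda>n \<omega>. c) c"
  unfolding conv_in_prob_def by (auto intro!: always_eventually bexI[of _ "{}"])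

lemma conv_in_prob_dist: "conv_in_prob M X a \<Longrightarrow> conv_in_prob M (\<lambda>n \<omega>. dist (X n \<omega>) a) (0::real)"
  unfolding conv_in_prob_def by simp

lemma conv_in_prob_imp_measure_tendsto:
  assumes "finite_measure M" "conv_in_prob M X c" "\<epsilon> > 0"
  shows "(\<lambda>n. measure M {\<omega>\<in>space M. \<epsilon> < dist (X n \<omega>) c}) \<longlonglongrightarrow> 0"
proof (rule LIMSEQ_I)
  interpret finite_measure M by fact
  fix r :: real assume "r > 0"
  then have "\<forall>\<^sub>F n in sequentially. \<exists>A\<in>sets M.
      {\<omega>\<in>space M. \<epsilon> < dist (X n \<omega>) c} \<subseteq> A \<and> measure M A \<le> r / 2"
    using assms(2,3) unfolding conv_in_prob_def by (meson half_gt_zero)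
  then obtain N where N: "\<And>n. n \<ge> N \<Longrightarrow> \<exists>A\<in>sets M.
      {\<omega>\<in>space M. \<epsilon> < dist (X n \<omega>) c} \<subseteq> A \<and> measure M A \<le> r / 2"
    unfolding eventually_sequentially by auto
  have half: "measure M {\<omega>\<in>space M. \<epsilon> < dist (X n \<omega>) c} \<le> r / 2" if "n \<ge> N" for n
  proof (cases "{\<omega>\<in>space M. \<epsilon> < dist (X n \<omega>) c} \<in> sets M")
    case True
    from N[OF that] obtain A where "A \<in> sets M" "{\<omega>\<in>space M. \<epsilon> < dist (X n \<omega>) c} \<subseteq> A"
      "measure M A \<le> r / 2" by blast
    then show ?thesis using finite_measure_mono[of _ A] by (meson order_trans)
  next
    case False
    with \<open>r > 0\<close> show ?thesis by (simp add: measure_notin_sets)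
  qed
  have "measure M {\<omega>\<in>space M. \<epsilon> < dist (X n \<omega>) c} < r" if "n \<ge> N" for n
    using half[OF that] \<open>r > 0\<close> by linarith
  then show "\<exists>N. \<forall>n\<ge>N. norm (measure M {\<omega>\<in>space M. \<epsilon> < dist (X n \<omega>) c} - 0) < r"
    by auto
qed

lemma conv_in_prob_finite_cover:
  fixes X :: "'i \<Rightarrow> nat \<Rightarrow> 'a \<Rightarrow> 'b::metric_space" and Z :: "nat \<Rightarrow> 'a \<Rightarrow> 'c::metric_space"
  assumes "finite I" "\<And>i. i \<in> I \<Longrightarrow> conv_in_prob M (X i) (c i)"
    and cover: "\<And>\<epsilon>. \<epsilon> > 0 \<Longrightarrow> \<exists>\<epsilon>'>0. \<forall>n. \<forall>\<omega>\<in>space M. \<epsilon> < dist (Z n \<omega>) d \<longrightarrow>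
        (\<exists>i\<in>I. \<epsilon>' < dist (X i n \<omega>) (c i))"
  shows "conv_in_prob M Z d"
  unfolding conv_in_prob_def
proof (intro allI impI)
  fix \<epsilon> \<delta> :: real assume "\<epsilon> > 0" "\<delta> > 0"
  obtain \<epsilon>' where "\<epsilon>' > 0" and \<epsilon>': "\<And>n \<omega>. \<omega> \<in> space M \<Longrightarrow> \<epsilon> < dist (Z n \<omega>) d \<Longrightarrow>
      \<exists>i\<in>I. \<epsilon>' < dist (X i n \<omega>) (c i)"
    using cover[OF \<open>\<epsilon> > 0\<close>] by blast
  define \<delta>' where "\<delta>' = \<delta> / (real (card I) + 1)"
  have "\<delta>' > 0" using \<open>\<delta> > 0\<close> by (simp add: \<delta>'_def)
  have "\<forall>\<^sub>F n in sequentially. \<forall>i\<in>I. \<exists>A\<in>sets M.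
      {\<omega>\<in>space M. \<epsilon>' < dist (X i n \<omega>) (c i)} \<subseteq> A \<and> measure M A \<le> \<delta>'"
    using assms(2) \<open>\<epsilon>' > 0\<close> \<open>\<delta>' > 0\<close>
    by (intro eventually_ball_finite[OF \<open>finite I\<close>]) (simp add: conv_in_prob_def)
  then show "\<forall>\<^sub>F n in sequentially. \<exists>A\<in>sets M.
      {\<omega>\<in>space M. \<epsilon> < dist (Z n \<omega>) d} \<subseteq> A \<and> measure M A \<le> \<delta>"
  proof eventually_elim
    case (elim n)
    then obtain A where A: "\<And>i. i \<in> I \<Longrightarrow> A i \<in> sets M"
      "\<And>i. i \<in> I \<Longrightarrow> {\<omega>\<in>space M. \<epsilon>' < dist (X i n \<omega>) (c i)} \<subseteq> A i"
      "\<And>i. i \<in> I \<Longrightarrow> measure M (A i) \<le> \<delta>'"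
      by metis
    have "measure M (\<Union>i\<in>I. A i) \<le> (\<Sum>i\<in>I. measure M (A i))"
      using A(1) \<open>finite I\<close> by (intro measure_UNION_le) auto
    also have "\<dots> \<le> real (card I) * \<delta>'" using sum_mono[of I _ "\<lambda>_. \<delta>'"] A(3) by simp
    also have "\<dots> \<le> \<delta>" using \<open>\<delta> > 0\<close> by (simp add: \<delta>'_def field_simps)
    finally have "measure M (\<Union>i\<in>I. A i) \<le> \<delta>" .
    moreover have "(\<Union>i\<in>I. A i) \<in> sets M" using A(1) \<open>finite I\<close> by auto
    moreover have "{\<omega>\<in>space M. \<epsilon> < dist (Z n \<omega>) d} \<subseteq> (\<Union>i\<in>I. A i)"
      using A(2) \<epsilon>' by blast
    ultimately show ?case by blast
  qed
qed

lemma conv_in_prob_dominated: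
  assumes "conv_in_prob M X c"
    and "\<And>\<epsilon>. \<epsilon> > 0 \<Longrightarrow> \<exists>\<epsilon>'>0. \<forall>n. \<forall>\<omega>\<in>space M. \<epsilon> < dist (Z n \<omega>) d \<longrightarrow> \<epsilon>' < dist (X n \<omega>) c"
  shows "conv_in_prob M Z d"
proof (rule conv_in_prob_finite_cover[where I = "{()}" and X = "\<lambda>_. X" and c = "\<lambda>_. c"])
  fix \<epsilon> :: real assume "\<epsilon> > 0"
  with assms(2) show "\<exists>\<epsilon>'>0. \<forall>n. \<forall>\<omega>\<in>space M. \<epsilon> < dist (Z n \<omega>) d \<longrightarrow> (\<exists>i\<in>{()}. \<epsilon>' < dist (X n \<omega>) c)"
    by simp
qed (use assms(1) in simp_all)

lemma conv_in_prob_isCont: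
  assumes "conv_in_prob M X c" "isCont g c"
  shows "conv_in_prob M (\<lambda>n \<omega>. g (X n \<omega>)) (g c)"
proof (rule conv_in_prob_dominated[OF assms(1)])
  fix \<epsilon> :: real assume "\<epsilon> > 0"
  then obtain \<eta> where "\<eta> > 0" and \<eta>: "\<And>x. dist x c < \<eta> \<Longrightarrow> dist (g x) (g c) < \<epsilon>"
    using assms(2) unfolding continuous_at_eps_delta by metis
  have "\<eta> / 2 < dist x c" if "\<epsilon> < dist (g x) (g c)" for x
  proof -
    have "\<not> dist x c < \<eta>" using \<eta>[of x] that by linarith
    with \<open>\<eta> > 0\<close> show ?thesis by linarith
  qed
  with \<open>\<eta> > 0\<close> show "\<exists>\<epsilon>'>0. \<forall>n. \<forall>\<omega>\<in>space M. \<epsilon> < dist (g (X n \<omega>)) (g c) \<longrightarrow> \<epsilon>' < dist (X n \<omega>) c"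
    by (intro exI[of _ "\<eta> / 2"]) auto
qed

lemma conv_in_prob_Pair:
  assumes "conv_in_prob M X a" "conv_in_prob M Y b"
  shows "conv_in_prob M (\<lambda>n \<omega>. (X n \<omega>, Y n \<omega>)) (a, b)"
proof (rule conv_in_prob_finite_cover[where X = "\<lambda>D. D" and c = "\<lambda>_. 0::real"
      and I = "{\<lambda>n \<omega>. dist (X n \<omega>) a, \<lambda>n \<omega>. dist (Y n \<omega>) b}"])
  fix \<epsilon> :: real assume "\<epsilon> > 0"
  have "\<epsilon> / 2 < dist x a \<or> \<epsilon> / 2 < dist y b" if "\<epsilon> < dist (x, y) (a, b)" for x y
  proof -
    have "dist (x, y) (a, b) \<le> dist x a + dist y b"
      by (simp add: dist_Pair_Pair sqrt_sum_squares_le_sum)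
    with that show ?thesis by linarith
  qed
  with \<open>\<epsilon> > 0\<close> show "\<exists>\<epsilon>'>0. \<forall>n. \<forall>\<omega>\<in>space M. \<epsilon> < dist (X n \<omega>, Y n \<omega>) (a, b) \<longrightarrow>
      (\<exists>D\<in>{\<lambda>n \<omega>. dist (X n \<omega>) a, \<lambda>n \<omega>. dist (Y n \<omega>) b}. \<epsilon>' < dist (D n \<omega>) 0)"
    by (intro exI[of _ "\<epsilon> / 2"]) auto
qed (use conv_in_prob_dist[OF assms(1)] conv_in_prob_dist[OF assms(2)] in auto)

lemma conv_in_prob_euclidean:
  fixes X :: "nat \<Rightarrow> 'a \<Rightarrow> 'v::euclidean_space"
  assumes "\<And>b. b \<in> Basis \<Longrightarrow> conv_in_prob M (\<lambda>n \<omega>. X n \<omega> \<bullet> b) (c \<bullet> b)"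
  shows "conv_in_prob M X c"
proof (rule conv_in_prob_finite_cover[where I = Basis and X = "\<lambda>b n \<omega>. X n \<omega> \<bullet> b" and c = "\<lambda>b. c \<bullet> b"])
  fix \<epsilon> :: real assume "\<epsilon> > 0"
  have "\<exists>b\<in>Basis. \<epsilon> / DIM('v) < dist (x \<bullet> b) (c \<bullet> b)" if "\<epsilon> < dist x c" for x
  proof (rule ccontr)
    assume "\<not> ?thesis"
    then have "\<bar>(x - c) \<bullet> b\<bar> \<le> \<epsilon> / DIM('v)" if "b \<in> Basis" for b
      using that by (auto simp: dist_real_def inner_diff_left not_less)
    then have "(\<Sum>b\<in>Basis. \<bar>(x - c) \<bullet> b\<bar>) \<le> (\<Sum>b\<in>(Basis::'v set). \<epsilon> / DIM('v))"
      by (rule sum_mono)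
    then have "(\<Sum>b\<in>Basis. \<bar>(x - c) \<bullet> b\<bar>) \<le> \<epsilon>" by simp
    with norm_le_l1[of "x - c"] \<open>\<epsilon> < dist x c\<close> show False by (simp add: dist_norm)
  qed
  with \<open>\<epsilon> > 0\<close> show "\<exists>\<epsilon>'>0. \<forall>n. \<forall>\<omega>\<in>space M. \<epsilon> < dist (X n \<omega>) c \<longrightarrow>
      (\<exists>b\<in>Basis. \<epsilon>' < dist (X n \<omega> \<bullet> b) (c \<bullet> b))"
    by (intro exI[of _ "\<epsilon> / DIM('v)"]) auto
qed (use assms in auto)

lemma conv_in_prob_mult_integral_bounded:
  fixes X L :: "nat \<Rightarrow> 'a \<Rightarrow> real"
  assumes X: "conv_in_prob M X 0"
    and [measurable]: "\<And>n. L n \<in> borel_measurable M" and L_int: "\<And>n. integrable M (L n)"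
    and L_nonneg: "\<And>n \<omega>. \<omega> \<in> space M \<Longrightarrow> 0 \<le> L n \<omega>" and L_bound: "\<And>n. integral\<^sup>L M (L n) \<le> B"
  shows "conv_in_prob M (\<lambda>n \<omega>. L n \<omega> * X n \<omega>) 0"
  unfolding conv_in_prob_def
proof (intro allI impI)
  fix \<epsilon> \<delta> :: real assume "\<epsilon> > 0" "\<delta> > 0"
  define K where "K = 2 * (\<bar>B\<bar> + 1) / \<delta>"
  have "K > 0" using \<open>\<delta> > 0\<close> by (simp add: K_def)
  have large_L: "measure M {\<omega>\<in>space M. K \<le> L n \<omega>} \<le> \<delta> / 2" for n
  proof -
    have "measure M {\<omega>\<in>space M. K \<le> L n \<omega>} \<le> integral\<^sup>L M (L n) / K"
      using L_int L_nonneg \<open>K > 0\<close>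
      by (intro integral_Markov_inequality_measure[where A = "space M"]) (auto intro!: AE_I2)
    also have "\<dots> \<le> (\<bar>B\<bar> + 1) / K"
      using L_bound[of n] \<open>K > 0\<close> by (intro divide_right_mono) auto
    also have "\<dots> = \<delta> / 2"
      using \<open>\<delta> > 0\<close> by (simp add: K_def field_simps add_pos_nonneg)
    finally show ?thesis .
  qed
  have "\<epsilon> / K > 0" "\<delta> / 2 > 0" using \<open>\<epsilon> > 0\<close> \<open>K > 0\<close> \<open>\<delta> > 0\<close> by auto
  then have "\<forall>\<^sub>F n in sequentially. \<exists>A\<in>sets M.
      {\<omega>\<in>space M. \<epsilon> / K < dist (X n \<omega>) 0} \<subseteq> A \<and> measure M A \<le> \<delta> / 2"
    using X unfolding conv_in_prob_def by blast
  then show "\<forall>\<^sub>F n in sequentially. \<exists>A\<in>sets M.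
      {\<omega>\<in>space M. \<epsilon> < dist (L n \<omega> * X n \<omega>) 0} \<subseteq> A \<and> measure M A \<le> \<delta>"
  proof eventually_elim
    case (elim n)
    then obtain A where A: "A \<in> sets M" "{\<omega>\<in>space M. \<epsilon> / K < \<bar>X n \<omega>\<bar>} \<subseteq> A" "measure M A \<le> \<delta> / 2"
      by auto
    let ?L = "{\<omega>\<in>space M. K \<le> L n \<omega>}"
    have "{\<omega>\<in>space M. \<epsilon> < \<bar>L n \<omega> * X n \<omega>\<bar>} \<subseteq> A \<union> ?L"
    proof
      fix \<omega> assume \<omega>: "\<omega> \<in> {\<omega>\<in>space M. \<epsilon> < \<bar>L n \<omega> * X n \<omega>\<bar>}"
      show "\<omega> \<in> A \<union> ?L"
      proof (rule ccontr)
        assume "\<omega> \<notin> A \<union> ?L"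
        with \<omega> A(2) have "\<bar>X n \<omega>\<bar> \<le> \<epsilon> / K" "L n \<omega> < K" by auto
        moreover have "0 \<le> L n \<omega>" using L_nonneg \<omega> by simp
        ultimately have "L n \<omega> * \<bar>X n \<omega>\<bar> \<le> K * (\<epsilon> / K)" by (intro mult_mono) auto
        with \<open>0 \<le> L n \<omega>\<close> have "\<bar>L n \<omega> * X n \<omega>\<bar> \<le> K * (\<epsilon> / K)" by (simp add: abs_mult)
        with \<omega> \<open>K > 0\<close> show False by simp
      qed
    qed
    moreover have "A \<union> ?L \<in> sets M" using A(1) by measurable
    moreover have "measure M (A \<union> ?L) \<le> \<delta>"
      using measure_Un_le[of A M ?L] A large_L[of n] by simp
    ultimately show ?case by auto
  qed
qed

lemma conv_in_prob_at_random_parameter: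
  fixes S :: "nat \<Rightarrow> 'a \<Rightarrow> 'p::metric_space \<Rightarrow> 'v::metric_space" and P :: "nat \<Rightarrow> 'a \<Rightarrow> 'p"
  assumes P: "conv_in_prob M P p" and S: "conv_in_prob M (\<lambda>n \<omega>. S n \<omega> p) \<mu>"
    and lipschitz: "\<And>n \<omega> q. \<omega> \<in> space M \<Longrightarrow> dist q p \<le> 1 \<Longrightarrow>
        dist (S n \<omega> q) (S n \<omega> p) \<le> L n \<omega> * dist q p"
    and "\<And>n. L n \<in> borel_measurable M" "\<And>n. integrable M (L n)"
    and L_nonneg: "\<And>n \<omega>. \<omega> \<in> space M \<Longrightarrow> 0 \<le> L n \<omega>" and "\<And>n. integral\<^sup>L M (L n) \<le> B"
  shows "conv_in_prob M (\<lambda>n \<omega>. S n \<omega> (P n \<omega>)) \<mu>"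
proof (rule conv_in_prob_finite_cover[where X = "\<lambda>D. D" and c = "\<lambda>_. 0::real"
      and I = "{\<lambda>n \<omega>. dist (P n \<omega>) p, \<lambda>n \<omega>. L n \<omega> * dist (P n \<omega>) p, \<lambda>n \<omega>. dist (S n \<omega> p) \<mu>}"])
  fix \<epsilon> :: real assume "\<epsilon> > 0"
  define \<epsilon>' where "\<epsilon>' = min 1 (\<epsilon> / 2)"
  have "\<epsilon>' < dist (P n \<omega>) p \<or> \<epsilon>' < L n \<omega> * dist (P n \<omega>) p \<or> \<epsilon>' < dist (S n \<omega> p) \<mu>"
    if "\<omega> \<in> space M" "\<epsilon> < dist (S n \<omega> (P n \<omega>)) \<mu>" for n \<omega>
  proof (rule ccontr)
    assume "\<not> ?thesis"
    then have "dist (P n \<omega>) p \<le> \<epsilon>'" "L n \<omega> * dist (P n \<omega>) p \<le> \<epsilon>'" "dist (S n \<omega> p) \<mu> \<le> \<epsilon>'"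
      by auto
    moreover have "dist (S n \<omega> (P n \<omega>)) (S n \<omega> p) \<le> L n \<omega> * dist (P n \<omega>) p"
      using lipschitz[OF that(1)] \<open>dist (P n \<omega>) p \<le> \<epsilon>'\<close> by (simp add: \<epsilon>'_def)
    ultimately show False
      using dist_triangle[of "S n \<omega> (P n \<omega>)" \<mu> "S n \<omega> p"] that(2) by (simp add: \<epsilon>'_def)
  qed
  with \<open>\<epsilon> > 0\<close> L_nonneg show "\<exists>\<epsilon>'>0. \<forall>n. \<forall>\<omega>\<in>space M. \<epsilon> < dist (S n \<omega> (P n \<omega>)) \<mu> \<longrightarrow>
      (\<exists>D\<in>{\<lambda>n \<omega>. dist (P n \<omega>) p, \<lambda>n \<omega>. L n \<omega> * dist (P n \<omega>) p, \<lambda>n \<omega>. dist (S n \<omega> p) \<mu>}.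
         \<epsilon>' < dist (D n \<omega>) 0)"
    by (intro exI[of _ \<epsilon>']) (auto simp: \<epsilon>'_def)
qed (use assms conv_in_prob_dist[OF P] conv_in_prob_dist[OF S]
       conv_in_prob_mult_integral_bounded[OF conv_in_prob_dist[OF P] assms(4-7)] in auto)

lemma conv_in_prob_mean_square:
  fixes X :: "nat \<Rightarrow> 'a \<Rightarrow> real"
  assumes [measurable]: "\<And>n. X n \<in> borel_measurable M"
    and integrable: "\<forall>\<^sub>F n in sequentially. integrable M (\<lambda>\<omega>. (X n \<omega> - c)\<^sup>2)"
    and lim: "(\<lambda>n. \<integral>\<omega>. (X n \<omega> - c)\<^sup>2 \<partial>M) \<longlonglongrightarrow> 0"
  shows "conv_in_prob M X c"
  unfolding conv_in_prob_def
proof (intro allI impI)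
  fix \<epsilon> \<delta> :: real assume "\<epsilon> > 0" "\<delta> > 0"
  then have "\<forall>\<^sub>F n in sequentially. (\<integral>\<omega>. (X n \<omega> - c)\<^sup>2 \<partial>M) < \<epsilon>\<^sup>2 * \<delta>"
    using lim by (intro order_tendstoD) auto
  with integrable show "\<forall>\<^sub>F n in sequentially. \<exists>A\<in>sets M.
      {\<omega>\<in>space M. \<epsilon> < dist (X n \<omega>) c} \<subseteq> A \<and> measure M A \<le> \<delta>"
  proof eventually_elim
    case (elim n)
    let ?A = "{\<omega>\<in>space M. \<epsilon>\<^sup>2 \<le> (X n \<omega> - c)\<^sup>2}"
    have "{\<omega>\<in>space M. \<epsilon> < dist (X n \<omega>) c} \<subseteq> ?A"
      using \<open>\<epsilon> > 0\<close> by (auto simp: dist_real_def abs_le_square_iff[symmetric])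
    moreover have "measure M ?A \<le> (\<integral>\<omega>. (X n \<omega> - c)\<^sup>2 \<partial>M) / \<epsilon>\<^sup>2"
      using elim(1) \<open>\<epsilon> > 0\<close> by (intro integral_Markov_inequality_measure[where A = "space M"]) auto
    moreover have "(\<integral>\<omega>. (X n \<omega> - c)\<^sup>2 \<partial>M) / \<epsilon>\<^sup>2 \<le> \<delta>"
      using elim(2) \<open>\<epsilon> > 0\<close> by (simp add: divide_le_eq mult.commute)
    ultimately show ?case by (intro bexI[of _ ?A]) auto
  qed
qed

section \<open>Weak law of large numbers\<close>

lemma indep_var_compose_pair:
  fixes Y :: "'i \<Rightarrow> 'a \<Rightarrow> 'b::topological_space"
  assumes "prob_space M" "prob_space.indep_vars M (\<lambda>_. borel) Y UNIV" "i \<noteq> j"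
    and [measurable]: "h \<in> borel_measurable borel" "k \<in> borel_measurable borel"
  shows "prob_space.indep_var M borel (\<lambda>\<omega>. h (Y i \<omega>) :: real) borel (\<lambda>\<omega>. k (Y j \<omega>) :: real)"
proof -
  interpret prob_space M by fact
  have "indep_var borel ((\<lambda>f. h (f i)) \<circ> (\<lambda>\<omega>. restrict (\<lambda>i. Y i \<omega>) {i}))
      borel ((\<lambda>f. k (f j)) \<circ> (\<lambda>\<omega>. restrict (\<lambda>i. Y i \<omega>) {j}))"
    using assms(3) by (intro indep_var_compose[OF indep_var_restrict[OF assms(2)]]) auto
  then show ?thesis by (simp add: comp_def)
qed

lemma integral_square_sum_uncorrelated:
  fixes Z :: "nat \<Rightarrow> 'a \<Rightarrow> real"
  assumes int: "\<And>i j. integrable M (\<lambda>\<omega>. Z i \<omega> * Z j \<omega>)"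
    and cov: "\<And>i j. (\<integral>\<omega>. Z i \<omega> * Z j \<omega> \<partial>M) = (if i = j then \<sigma> else 0)"
  shows "integrable M (\<lambda>\<omega>. (\<Sum>i<n. Z i \<omega>)\<^sup>2)" "(\<integral>\<omega>. (\<Sum>i<n. Z i \<omega>)\<^sup>2 \<partial>M) = real n * \<sigma>"
proof -
  have square: "(\<lambda>\<omega>. (\<Sum>i<n. Z i \<omega>)\<^sup>2) = (\<lambda>\<omega>. \<Sum>i<n. \<Sum>j<n. Z i \<omega> * Z j \<omega>)"
    by (simp add: power2_eq_square sum_product)
  show "integrable M (\<lambda>\<omega>. (\<Sum>i<n. Z i \<omega>)\<^sup>2)" unfolding square using int by auto
  have "(\<integral>\<omega>. (\<Sum>i<n. \<Sum>j<n. Z i \<omega> * Z j \<omega>) \<partial>M) = (\<Sum>i<n. \<Sum>j<n. \<integral>\<omega>. Z i \<omega> * Z j \<omega> \<partial>M)"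
    using int by (simp add: integral_sum)
  also have "\<dots> = real n * \<sigma>" by (simp add: cov)
  finally show "(\<integral>\<omega>. (\<Sum>i<n. Z i \<omega>)\<^sup>2 \<partial>M) = real n * \<sigma>" unfolding square .
qed

text \<open>The Chebyshev argument only uses pairwise independence.\<close>

lemma conv_in_prob_average_real:
  fixes Y :: "nat \<Rightarrow> 'a \<Rightarrow> 'b::topological_space" and g :: "'b \<Rightarrow> real"
  assumes "prob_space M" and Y[measurable]: "\<And>i. Y i \<in> borel_measurable M"
    and indep: "prob_space.indep_vars M (\<lambda>_. borel) Y UNIV"
    and law: "\<And>i. distr M borel (Y i) = N"
    and [measurable]: "g \<in> borel_measurable borel" and g_sq: "integrable N (\<lambda>y. (g y)\<^sup>2)"
  shows "conv_in_prob M (\<lambda>n \<omega>. (\<Sum>i<n. g (Y i \<omega>)) / real n) (integral\<^sup>L N g)"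
proof -
  interpret prob_space M by fact
  have "prob_space N" using prob_space_distr[OF Y[of 0]] law[of 0] by simp
  interpret N: prob_space N by fact
  have "sets N = sets borel" using law[of 0] by (metis sets_distr)
  then have [measurable]: "g \<in> borel_measurable N" by (simp add: measurable_def space_borel)
  have g_int: "integrable N g"
    by (rule finite_measure.square_integrable_imp_integrable[OF prob_space.finite_measure[OF \<open>prob_space N\<close>] _ g_sq])
      measurable
  define \<mu> where "\<mu> = integral\<^sup>L N g"
  define \<sigma> where "\<sigma> = (\<integral>y. (g y - \<mu>)\<^sup>2 \<partial>N)"
  define Z where "Z i = (\<lambda>\<omega>. g (Y i \<omega>) - \<mu>)" for i
  have transfer: "integrable M (\<lambda>\<omega>. f (Y i \<omega>)) \<and> (\<integral>\<omega>. f (Y i \<omega>) \<partial>M) = integral\<^sup>L N f"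
    if [measurable]: "f \<in> borel_measurable borel" "integrable N f" for f :: "'b \<Rightarrow> real" and i
    using that(2) law[of i] integrable_distr_eq[of "Y i" M borel f] integral_distr[of "Y i" M borel f] by simp
  have sq_int: "integrable N (\<lambda>y. (g y - \<mu>)\<^sup>2)"
    using g_int g_sq by (simp add: power2_diff)
  have Z_int: "integrable M (Z i)" and Z_mean: "integral\<^sup>L M (Z i) = 0" for i
    using transfer[of "\<lambda>y. g y - \<mu>" i] g_int by (simp_all add: Z_def \<mu>_def N.prob_space)
  have "integrable M (\<lambda>\<omega>. Z i \<omega> * Z j \<omega>) \<and> (\<integral>\<omega>. Z i \<omega> * Z j \<omega> \<partial>M) = (if i = j then \<sigma> else 0)"
    for i j
  proof (cases "i = j")
    case True
    then show ?thesis using transfer[of "\<lambda>y. (g y - \<mu>)\<^sup>2" i] sq_int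
      by (simp add: Z_def \<sigma>_def power2_eq_square)
  next
    case False
    have "indep_var borel (Z i) borel (Z j)"
      using indep_var_compose_pair[OF \<open>prob_space M\<close> indep False, of "\<lambda>y. g y - \<mu>" "\<lambda>y. g y - \<mu>"]
      by (simp add: Z_def)
    with False Z_int Z_mean show ?thesis
      by (simp add: indep_var_lebesgue_integral indep_var_integrable)
  qed
  note sum_sq = integral_square_sum_uncorrelated[of M Z \<sigma>, OF conjunct1 conjunct2, OF this this]
  have average: "((\<Sum>i<n. g (Y i \<omega>)) / real n - \<mu>)\<^sup>2 = (\<Sum>i<n. Z i \<omega>)\<^sup>2 / (real n)\<^sup>2"
    if "n > 0" for n \<omega>
    using that by (simp add: Z_def sum_subtractf field_simps power2_eq_square)
  show ?thesis
    unfolding \<mu>_def[symmetric]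
  proof (rule conv_in_prob_mean_square)
    show "\<forall>\<^sub>F n in sequentially. integrable M (\<lambda>\<omega>. ((\<Sum>i<n. g (Y i \<omega>)) / real n - \<mu>)\<^sup>2)"
      using eventually_gt_at_top[of 0] by eventually_elim (use average sum_sq in simp)
    have "\<forall>\<^sub>F n in sequentially. (\<integral>\<omega>. ((\<Sum>i<n. g (Y i \<omega>)) / real n - \<mu>)\<^sup>2 \<partial>M) = \<sigma> / real n"
      using eventually_gt_at_top[of 0] by eventually_elim (use average sum_sq in \<open>simp add: power2_eq_square\<close>)
    then show "(\<lambda>n. \<integral>\<omega>. ((\<Sum>i<n. g (Y i \<omega>)) / real n - \<mu>)\<^sup>2 \<partial>M) \<longlonglongrightarrow> 0"
      using lim_const_over_n[of \<sigma>] by (simp only: tendsto_cong)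
  qed measurable
qed

lemma conv_in_prob_average:
  fixes Y :: "nat \<Rightarrow> 'a \<Rightarrow> 'b::topological_space" and g :: "'b \<Rightarrow> 'v::euclidean_space"
  assumes "prob_space M" and Y[measurable]: "\<And>i. Y i \<in> borel_measurable M"
    and indep: "prob_space.indep_vars M (\<lambda>_. borel) Y UNIV"
    and law: "\<And>i. distr M borel (Y i) = N"
    and [measurable]: "g \<in> borel_measurable borel" and g_sq: "integrable N (\<lambda>y. (norm (g y))\<^sup>2)"
  shows "conv_in_prob M (\<lambda>n \<omega>. (\<Sum>i<n. g (Y i \<omega>)) /\<^sub>R real n) (integral\<^sup>L N g)"
proof (rule conv_in_prob_euclidean)
  have "prob_space N" using prob_space.prob_space_distr[OF \<open>prob_space M\<close> Y[of 0]] law[of 0] by simp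
  have "sets N = sets borel" using law[of 0] by (metis sets_distr)
  then have g_N[measurable]: "g \<in> borel_measurable N"
    and meas_N: "f \<in> borel_measurable borel \<Longrightarrow> f \<in> borel_measurable N" for f :: "'b \<Rightarrow> real"
    by (simp_all add: measurable_def space_borel)
  have "integrable N (\<lambda>y. norm (g y))"
    by (rule finite_measure.square_integrable_imp_integrable[OF prob_space.finite_measure[OF \<open>prob_space N\<close>] _ g_sq])
      measurable
  then have g_int: "integrable N g"
    by (subst integrable_norm_iff[symmetric]) measurable
  fix b :: 'v assume "b \<in> Basis"
  have "(\<lambda>y. (g y \<bullet> b)\<^sup>2) \<in> borel_measurable N" by (rule meas_N) measurable
  moreover have "(g y \<bullet> b)\<^sup>2 \<le> (norm (g y))\<^sup>2" for y
    using Basis_le_norm[OF \<open>b \<in> Basis\<close>, of "g y"] by (simp add: abs_le_square_iff[symmetric])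
  ultimately have "integrable N (\<lambda>y. (g y \<bullet> b)\<^sup>2)"
    by (intro Bochner_Integration.integrable_bound[OF g_sq]) (auto intro!: AE_I2)
  then have "conv_in_prob M (\<lambda>n \<omega>. (\<Sum>i<n. g (Y i \<omega>) \<bullet> b) / real n) (integral\<^sup>L N (\<lambda>y. g y \<bullet> b))"
    by (intro conv_in_prob_average_real[OF assms(1-4)]) auto
  then show "conv_in_prob M (\<lambda>n \<omega>. ((\<Sum>i<n. g (Y i \<omega>)) /\<^sub>R real n) \<bullet> b) (integral\<^sup>L N g \<bullet> b)"
    using g_int by (simp add: inner_sum_left divide_inverse mult.commute)
qed

lemma integral_average_identically_distributed:
  fixes Y :: "nat \<Rightarrow> 'a \<Rightarrow> 'b::topological_space" and f :: "'b \<Rightarrow> real"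
  assumes [measurable]: "\<And>i. Y i \<in> borel_measurable M" and law: "\<And>i. distr M borel (Y i) = N"
    and [measurable]: "f \<in> borel_measurable borel" and "integrable N f"
  shows "integrable M (\<lambda>\<omega>. (\<Sum>i<n. f (Y i \<omega>)) / real n)"
    and "(\<integral>\<omega>. (\<Sum>i<n. f (Y i \<omega>)) / real n \<partial>M) = (if n = 0 then 0 else integral\<^sup>L N f)"
proof -
  have int: "integrable M (\<lambda>\<omega>. f (Y i \<omega>))" and eq: "(\<integral>\<omega>. f (Y i \<omega>) \<partial>M) = integral\<^sup>L N f" for i
    using assms(4) law[of i] integrable_distr_eq[of "Y i" M borel f] integral_distr[of "Y i" M borel f]
    by simp_all
  show "integrable M (\<lambda>\<omega>. (\<Sum>i<n. f (Y i \<omega>)) / real n)" using int by auto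
  show "(\<integral>\<omega>. (\<Sum>i<n. f (Y i \<omega>)) / real n \<partial>M) = (if n = 0 then 0 else integral\<^sup>L N f)"
    using int by (simp add: integral_sum eq)
qed

lemma dist_weighted_average_le:
  fixes h :: "'y \<Rightarrow> 'v::real_normed_vector"
  assumes "\<And>y. norm ((c y q - c y p) *\<^sub>R h y) \<le> L y * d"
  shows "dist ((\<Sum>i<n. c (ys i) q *\<^sub>R h (ys i)) /\<^sub>R real n) ((\<Sum>i<n. c (ys i) p *\<^sub>R h (ys i)) /\<^sub>R real n)
    \<le> (\<Sum>i<n. L (ys i)) / real n * d"
proof -
  have "dist ((\<Sum>i<n. c (ys i) q *\<^sub>R h (ys i)) /\<^sub>R real n) ((\<Sum>i<n. c (ys i) p *\<^sub>R h (ys i)) /\<^sub>R real n)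
      = norm (\<Sum>i<n. (c (ys i) q - c (ys i) p) *\<^sub>R h (ys i)) / real n"
    by (simp add: dist_norm scaleR_diff_left sum_subtractf divide_inverse mult.commute
        flip: scaleR_diff_right)
  also have "\<dots> \<le> (\<Sum>i<n. L (ys i) * d) / real n"
    by (intro divide_right_mono order_trans[OF norm_sum sum_mono] assms) simp
  finally show ?thesis by (simp add: sum_distrib_right)
qed

text \<open>The weights are Lipschitz in the parameter near \<open>p\<close> with a constant linear in \<open>norm y\<close>,
  so the random Lipschitz constant of the average has bounded expectation once \<open>Y\<close> has a
  second moment.\<close>

lemma conv_in_prob_weighted_average:
  fixes Y :: "nat \<Rightarrow> 'a \<Rightarrow> 'y::euclidean_space" and c :: "'y \<Rightarrow> 'p::metric_space \<Rightarrow> real"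
    and h :: "'y \<Rightarrow> 'v::euclidean_space"
  assumes "prob_space M" and Y[measurable]: "\<And>i. Y i \<in> borel_measurable M"
    and indep: "prob_space.indep_vars M (\<lambda>_. borel) Y UNIV"
    and law: "\<And>i. distr M borel (Y i) = N" and moment: "integrable N (\<lambda>y. (norm y)\<^sup>2)"
    and P: "conv_in_prob M P p"
    and [measurable]: "\<And>q. (\<lambda>y. c y q) \<in> borel_measurable borel" and c_bound: "\<And>y q. \<bar>c y q\<bar> \<le> 1"
    and c_lipschitz: "\<And>y q. dist q p \<le> 1 \<Longrightarrow> \<bar>c y q - c y p\<bar> \<le> (2 * norm y + C) * dist q p"
    and "0 \<le> C"
    and [measurable]: "h \<in> borel_measurable borel" and h_bound: "\<And>y. norm (h y) \<le> 1 + norm y"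
  shows "conv_in_prob M (\<lambda>n \<omega>. (\<Sum>i<n. c (Y i \<omega>) (P n \<omega>) *\<^sub>R h (Y i \<omega>)) /\<^sub>R real n)
      (\<integral>y. c y p *\<^sub>R h y \<partial>N)"
proof -
  interpret N: prob_space N using prob_space.prob_space_distr[OF \<open>prob_space M\<close> Y[of 0]] law[of 0] by simp
  have "sets N = sets borel" using law[of 0] by (metis sets_distr)
  then have meas_N: "f \<in> borel_measurable borel \<Longrightarrow> f \<in> borel_measurable N" for f :: "'y \<Rightarrow> real"
    by (simp add: measurable_def space_borel)
  have norm_int: "integrable N norm"
    by (rule N.square_integrable_imp_integrable[OF _ moment]) (rule meas_N, measurable)
  define L where "L y = (2 * norm y + C) * (1 + norm y)" for y :: 'y
  have [measurable]: "L \<in> borel_measurable borel" unfolding L_def by measurable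
  have L_nonneg: "0 \<le> L y" for y unfolding L_def using \<open>0 \<le> C\<close> by simp
  have "L = (\<lambda>y. 2 * (norm y)\<^sup>2 + (2 + C) * norm y + C)"
    by (auto simp: L_def fun_eq_iff algebra_simps power2_eq_square)
  then have "integrable N L" using moment norm_int by simp
  note average_L = integral_average_identically_distributed[OF Y law, of L, OF _ this]
  have sq_bound: "(norm (c y p *\<^sub>R h y))\<^sup>2 \<le> 2 * (1 + (norm y)\<^sup>2)" for y
  proof -
    have "norm (c y p *\<^sub>R h y) \<le> 1 * (1 + norm y)"
      using c_bound[of y p] h_bound[of y] by (simp only: norm_scaleR) (intro mult_mono, auto)
    then have "(norm (c y p *\<^sub>R h y))\<^sup>2 \<le> (1 + norm y)\<^sup>2" by (intro power_mono) auto
    also have "\<dots> \<le> 2 * (1 + (norm y)\<^sup>2)" using zero_le_power2[of "1 - norm y"] by (simp add: power2_diff power2_sum)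
    finally show ?thesis .
  qed
  have "integrable N (\<lambda>y. 2 * (1 + (norm y)\<^sup>2))" using moment by simp
  then have "integrable N (\<lambda>y. (norm (c y p *\<^sub>R h y))\<^sup>2)"
    by (rule Bochner_Integration.integrable_bound) (rule meas_N, measurable, use sq_bound in \<open>auto intro!: AE_I2\<close>)
  then have at_p: "conv_in_prob M (\<lambda>n \<omega>. (\<Sum>i<n. c (Y i \<omega>) p *\<^sub>R h (Y i \<omega>)) /\<^sub>R real n) (\<integral>y. c y p *\<^sub>R h y \<partial>N)"
    by (intro conv_in_prob_average[OF assms(1-4)]) measurable
  show ?thesis
  proof (rule conv_in_prob_at_random_parameter[where S = "\<lambda>n \<omega> q. (\<Sum>i<n. c (Y i \<omega>) q *\<^sub>R h (Y i \<omega>)) /\<^sub>R real n"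
        and L = "\<lambda>n \<omega>. (\<Sum>i<n. L (Y i \<omega>)) / real n" and B = "\<bar>integral\<^sup>L N L\<bar>",
        OF P at_p])
    fix n \<omega> q assume "dist q p \<le> 1"
    have "norm ((c y q - c y p) *\<^sub>R h y) \<le> L y * dist q p" for y
    proof -
      have "norm ((c y q - c y p) *\<^sub>R h y) \<le> ((2 * norm y + C) * dist q p) * (1 + norm y)"
        using c_lipschitz[OF \<open>dist q p \<le> 1\<close>] h_bound \<open>0 \<le> C\<close> by (simp only: norm_scaleR) (intro mult_mono, auto)
      then show ?thesis by (simp add: L_def algebra_simps)
    qed
    then show "dist ((\<Sum>i<n. c (Y i \<omega>) q *\<^sub>R h (Y i \<omega>)) /\<^sub>R real n)
        ((\<Sum>i<n. c (Y i \<omega>) p *\<^sub>R h (Y i \<omega>)) /\<^sub>R real n) \<le> (\<Sum>i<n. L (Y i \<omega>)) / real n * dist q p"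
      by (rule dist_weighted_average_le)
  qed (use average_L L_nonneg in \<open>auto simp: sum_nonneg\<close>)
qed

lemma inverse_scaleR_divide_cancel:
  fixes b :: "'a::real_vector"
  assumes "n = 0 \<Longrightarrow> b = 0"
  shows "inverse (a /\<^sub>R real n) *\<^sub>R (b /\<^sub>R real n) = inverse a *\<^sub>R b"
  using assms by (cases "n = 0") (simp_all add: field_simps)

lemma conv_in_prob_weighted_mean:
  fixes Y :: "nat \<Rightarrow> 'a \<Rightarrow> 'y::euclidean_space" and c :: "'y \<Rightarrow> 'p::metric_space \<Rightarrow> real"
  assumes "prob_space M" and Y[measurable]: "\<And>i. Y i \<in> borel_measurable M"
    and indep: "prob_space.indep_vars M (\<lambda>_. borel) Y UNIV"
    and law: "\<And>i. distr M borel (Y i) = N" and moment: "integrable N (\<lambda>y. (norm y)\<^sup>2)"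
    and P: "conv_in_prob M P p"
    and [measurable]: "\<And>q. (\<lambda>y. c y q) \<in> borel_measurable borel"
    and c_pos: "\<And>y q. 0 < c y q" and c_bound: "\<And>y q. c y q \<le> 1"
    and c_lipschitz: "\<And>y q. dist q p \<le> 1 \<Longrightarrow> \<bar>c y q - c y p\<bar> \<le> (2 * norm y + C) * dist q p"
    and "0 \<le> C"
  shows "conv_in_prob M (\<lambda>n \<omega>. inverse (\<Sum>i<n. c (Y i \<omega>) (P n \<omega>)) *\<^sub>R (\<Sum>i<n. c (Y i \<omega>) (P n \<omega>) *\<^sub>R Y i \<omega>))
      (inverse (\<integral>y. c y p \<partial>N) *\<^sub>R (\<integral>y. c y p *\<^sub>R y \<partial>N))"
proof -
  interpret N: prob_space N using prob_space.prob_space_distr[OF \<open>prob_space M\<close> Y[of 0]] law[of 0] by simp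
  have "sets N = sets borel" using law[of 0] by (metis sets_distr)
  then have [measurable]: "(\<lambda>y. c y p) \<in> borel_measurable N" by (simp add: measurable_def space_borel)
  have "\<bar>c y q\<bar> \<le> 1" for y q using c_pos[of y q] c_bound[of y q] by simp
  note weighted_average = conv_in_prob_weighted_average[OF assms(1-6) _ this c_lipschitz \<open>0 \<le> C\<close>]
  have "conv_in_prob M
      (\<lambda>n \<omega>. ((\<Sum>i<n. c (Y i \<omega>) (P n \<omega>) *\<^sub>R (1::real)) /\<^sub>R real n, (\<Sum>i<n. c (Y i \<omega>) (P n \<omega>) *\<^sub>R Y i \<omega>) /\<^sub>R real n))
      ((\<integral>y. c y p *\<^sub>R (1::real) \<partial>N), (\<integral>y. c y p *\<^sub>R y \<partial>N))"
    by (intro conv_in_prob_Pair weighted_average) auto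
  moreover have "integrable N (\<lambda>y. c y p)"
    using c_pos c_bound by (intro N.integrable_const_bound[where B = 1]) (auto intro!: AE_I2 simp: less_imp_le)
  then have "0 < (\<integral>y. c y p \<partial>N)"
    using N.integral_less_AE_space[of "\<lambda>_. 0" "\<lambda>y. c y p"] c_pos by (simp add: N.emeasure_space_1)
  then have "isCont (\<lambda>z. inverse (fst z) *\<^sub>R snd z) ((\<integral>y. c y p *\<^sub>R (1::real) \<partial>N), (\<integral>y. c y p *\<^sub>R y \<partial>N))"
    by (auto intro!: continuous_intros)
  ultimately have "conv_in_prob M (\<lambda>n \<omega>. inverse ((\<Sum>i<n. c (Y i \<omega>) (P n \<omega>)) /\<^sub>R real n) *\<^sub>R
      ((\<Sum>i<n. c (Y i \<omega>) (P n \<omega>) *\<^sub>R Y i \<omega>) /\<^sub>R real n))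
      (inverse (\<integral>y. c y p \<partial>N) *\<^sub>R (\<integral>y. c y p *\<^sub>R y \<partial>N))"
    using conv_in_prob_isCont by fastforce
  moreover have "inverse ((\<Sum>i<n. c (Y i \<omega>) (P n \<omega>)) /\<^sub>R real n) *\<^sub>R
      ((\<Sum>i<n. c (Y i \<omega>) (P n \<omega>) *\<^sub>R Y i \<omega>) /\<^sub>R real n)
      = inverse (\<Sum>i<n. c (Y i \<omega>) (P n \<omega>)) *\<^sub>R (\<Sum>i<n. c (Y i \<omega>) (P n \<omega>) *\<^sub>R Y i \<omega>)" for n \<omega>
    by (rule inverse_scaleR_divide_cancel) simp
  ultimately show ?thesis by (simp only:)
qed

section \<open>Responsibilities\<close>

lemma v_d_logistic: "v_d y m1 m2 = 1 / (1 + exp ((norm (y - m1))\<^sup>2 / 2 - (norm (y - m2))\<^sup>2 / 2))"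
proof -
  have "v_d y m1 m2 = exp (- (norm (y - m1))\<^sup>2 / 2) / (exp (- (norm (y - m1))\<^sup>2 / 2) + exp (- (norm (y - m2))\<^sup>2 / 2))"
    unfolding v_d_def phi_d_def by (simp flip: distrib_left)
  also have "\<dots> = 1 / (1 + exp (- (norm (y - m2))\<^sup>2 / 2) / exp (- (norm (y - m1))\<^sup>2 / 2))"
    by (simp add: field_simps add_pos_pos)
  finally show ?thesis by (simp flip: exp_diff)
qed

lemma v_d_pos: "0 < v_d y m1 m2" and v_d_less_1: "v_d y m1 m2 < 1"
  unfolding v_d_logistic by (auto simp: field_simps add_pos_pos)

lemma borel_measurable_v_d[measurable]: "(\<lambda>y. v_d y m1 m2) \<in> borel_measurable borel"
  unfolding v_d_logistic by measurable

lemma logistic_lipschitz: "\<bar>1 / (1 + exp s) - 1 / (1 + exp t)\<bar> \<le> \<bar>s - t\<bar>" for s t :: real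
proof -
  have "1 / (1 + exp s) - 1 / (1 + exp t) \<le> t - s" "0 \<le> 1 / (1 + exp s) - 1 / (1 + exp t)"
    if "s \<le> t" for s t :: real
  proof -
    have pos: "0 < 1 + exp s" "0 < 1 + exp t" by (auto simp: add_pos_pos)
    have diff: "1 / (1 + exp s) - 1 / (1 + exp t) = (exp t - exp s) / ((1 + exp s) * (1 + exp t))"
      using pos by (simp add: field_simps)
    have "exp t * (1 + (s - t)) \<le> exp t * exp (s - t)" by (intro mult_left_mono exp_ge_add_one_self) auto
    then have "exp t - exp s \<le> exp t * (t - s)" by (simp add: algebra_simps flip: exp_add)
    also have "\<dots> \<le> ((1 + exp s) * (1 + exp t)) * (t - s)"
      using \<open>s \<le> t\<close> by (intro mult_right_mono) (auto simp: algebra_simps)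
    finally show "1 / (1 + exp s) - 1 / (1 + exp t) \<le> t - s"
      unfolding diff using pos by (simp add: divide_le_eq mult.commute)
    show "0 \<le> 1 / (1 + exp s) - 1 / (1 + exp t)" unfolding diff using pos \<open>s \<le> t\<close> by simp
  qed
  from this[of s t] this[of t s] show ?thesis by (cases "s \<le> t") auto
qed

lemma abs_norm_sq_diff_le:
  fixes y a b :: "'a::real_normed_vector"
  shows "\<bar>(norm (y - a))\<^sup>2 - (norm (y - b))\<^sup>2\<bar> \<le> norm (a - b) * (2 * norm y + norm a + norm b)"
proof -
  have "(norm (y - a))\<^sup>2 - (norm (y - b))\<^sup>2 = (norm (y - a) - norm (y - b)) * (norm (y - a) + norm (y - b))"
    by (simp add: power2_eq_square algebra_simps)
  then have "\<bar>(norm (y - a))\<^sup>2 - (norm (y - b))\<^sup>2\<bar> = \<bar>norm (y - a) - norm (y - b)\<bar> * (norm (y - a) + norm (y - b))"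
    by (simp add: abs_mult)
  also have "\<dots> \<le> norm (a - b) * (2 * norm y + norm a + norm b)"
  proof (rule mult_mono)
    show "\<bar>norm (y - a) - norm (y - b)\<bar> \<le> norm (a - b)"
      using norm_triangle_ineq3[of "y - a" "y - b"] by (simp add: norm_minus_commute)
    show "norm (y - a) + norm (y - b) \<le> 2 * norm y + norm a + norm b"
      using norm_triangle_ineq4[of y a] norm_triangle_ineq4[of y b] by simp
  qed auto
  finally show ?thesis .
qed

lemma v_d_lipschitz:
  assumes "dist (a1, a2) (m1, m2) \<le> 1"
  shows "\<bar>v_d y a1 a2 - v_d y m1 m2\<bar> \<le> (2 * norm y + (norm m1 + norm m2 + 1)) * dist (a1, a2) (m1, m2)"
proof -
  define D where "D = dist (a1, a2) (m1, m2)"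
  have "norm (a1 - m1) \<le> D" "norm (a2 - m2) \<le> D"
    by (simp_all add: D_def dist_Pair_Pair real_sqrt_sum_squares_ge1 real_sqrt_sum_squares_ge2 flip: dist_norm)
  moreover have "D \<le> 1" using assms by (simp add: D_def)
  ultimately have "norm a1 \<le> norm m1 + 1" "norm a2 \<le> norm m2 + 1"
    using norm_triangle_ineq2[of a1 m1] norm_triangle_ineq2[of a2 m2] by linarith+
  have bound: "\<bar>(norm (y - a))\<^sup>2 - (norm (y - m))\<^sup>2\<bar> \<le> D * (2 * norm y + 2 * norm m + 1)"
    if "norm (a - m) \<le> D" "norm a \<le> norm m + 1" for a m
  proof -
    have "norm (a - m) * (2 * norm y + norm a + norm m) \<le> D * (2 * norm y + 2 * norm m + 1)"
      using that by (intro mult_mono) (auto simp: D_def)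
    then show ?thesis using abs_norm_sq_diff_le[of y a m] by linarith
  qed
  have "\<bar>v_d y a1 a2 - v_d y m1 m2\<bar>
      \<le> \<bar>((norm (y - a1))\<^sup>2 - (norm (y - m1))\<^sup>2) / 2 - ((norm (y - a2))\<^sup>2 - (norm (y - m2))\<^sup>2) / 2\<bar>"
    unfolding v_d_logistic by (rule order_trans[OF logistic_lipschitz]) (simp add: algebra_simps diff_divide_distrib)
  also have "\<dots> \<le> \<bar>(norm (y - a1))\<^sup>2 - (norm (y - m1))\<^sup>2\<bar> / 2 + \<bar>(norm (y - a2))\<^sup>2 - (norm (y - m2))\<^sup>2\<bar> / 2"
    by (rule order_trans[OF abs_triangle_ineq4]) simp
  also have "\<dots> \<le> D * (2 * norm y + 2 * norm m1 + 1) / 2 + D * (2 * norm y + 2 * norm m2 + 1) / 2"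
    using bound[OF \<open>norm (a1 - m1) \<le> D\<close> \<open>norm a1 \<le> norm m1 + 1\<close>]
      bound[OF \<open>norm (a2 - m2) \<le> D\<close> \<open>norm a2 \<le> norm m2 + 1\<close>] by (intro add_mono divide_right_mono) auto
  also have "\<dots> = (2 * norm y + (norm m1 + norm m2 + 1)) * D" by (simp add: field_simps)
  finally show ?thesis by (simp add: D_def)
qed

section \<open>Second moment of the Gaussian mixture\<close>

lemma integrable_lborel_affine:
  fixes g :: "'a::euclidean_space \<Rightarrow> real"
  assumes "c \<noteq> 0" and [measurable]: "g \<in> borel_measurable borel" and "integrable lborel g"
  shows "integrable lborel (\<lambda>x. g (t + c *\<^sub>R x))"
proof -
  have "integrable (density (distr lborel borel (\<lambda>x. t + c *\<^sub>R x)) (\<lambda>_. \<bar>c\<bar> ^ DIM('a))) g"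
    using assms(3) by (subst (asm) lborel_affine[OF \<open>c \<noteq> 0\<close>, of t])
  then have "integrable lborel (\<lambda>x. \<bar>c\<bar> ^ DIM('a) *\<^sub>R g (t + c *\<^sub>R x))"
    by (subst (asm) integrable_density) (auto simp: integrable_distr_eq)
  then have "integrable lborel (\<lambda>x. (1 / \<bar>c\<bar> ^ DIM('a)) * (\<bar>c\<bar> ^ DIM('a) * g (t + c *\<^sub>R x)))"
    by (intro integrable_mult_right) simp
  then show ?thesis using \<open>c \<noteq> 0\<close> by simp
qed

lemma borel_measurable_phi_d[measurable]: "phi_d \<in> borel_measurable borel"
  unfolding phi_d_def by measurable

lemma phi_d_pos: "0 < phi_d y"
  unfolding phi_d_def by simp

definition gauss_kernel :: "'a::real_normed_vector \<Rightarrow> real" where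
  "gauss_kernel x = exp (- (norm x)\<^sup>2 / 2)"

lemma borel_measurable_gauss_kernel[measurable]: "gauss_kernel \<in> borel_measurable borel"
  unfolding gauss_kernel_def by measurable

lemma gauss_kernel_pos: "0 < gauss_kernel x"
  by (simp add: gauss_kernel_def)

lemma phi_d_eq_gauss_kernel: "phi_d x = (2 * pi) powr (- real CARD('n) / 2) * gauss_kernel (x :: real ^ 'n)"
  unfolding phi_d_def gauss_kernel_def by simp

lemma integrable_norm_sq_mult_gauss_kernel:
  assumes "integrable lborel (gauss_kernel :: 'a::euclidean_space \<Rightarrow> real)"
  shows "integrable lborel (\<lambda>x::'a. (norm x)\<^sup>2 * gauss_kernel x)"
proof (rule Bochner_Integration.integrable_bound)
  \<comment> \<open>dominate by the kernel rescaled by \<open>1 / sqrt 2\<close>, using \<open>u \<le> exp u\<close> for \<open>u = (norm x)\<^sup>2 / 4\<close>\<close>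
  have "integrable lborel (\<lambda>x::'a. gauss_kernel (0 + (1 / sqrt 2) *\<^sub>R x))"
    using assms by (intro integrable_lborel_affine) auto
  then show "integrable lborel (\<lambda>x::'a. 4 * exp (- (norm x)\<^sup>2 / 4))"
    by (simp add: gauss_kernel_def power_mult_distrib power_divide)
  show "AE x in lborel. norm ((norm (x::'a))\<^sup>2 * gauss_kernel x) \<le> norm (4 * exp (- (norm x)\<^sup>2 / 4))"
  proof (rule AE_I2)
    fix x :: 'a
    define u where "u = (norm x)\<^sup>2 / 4"
    have "u \<le> exp u" using exp_ge_add_one_self[of u] by linarith
    have "(norm x)\<^sup>2 * gauss_kernel x = 4 * u * exp (- (2 * u))" by (simp add: u_def gauss_kernel_def)
    also have "\<dots> \<le> 4 * exp u * exp (- (2 * u))"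
      using \<open>u \<le> exp u\<close> by (intro mult_right_mono) simp_all
    also have "\<dots> = 4 * exp (- u)" by (simp flip: exp_add)
    finally show "norm ((norm x)\<^sup>2 * gauss_kernel x) \<le> norm (4 * exp (- (norm x)\<^sup>2 / 4))"
      by (simp add: u_def gauss_kernel_def)
  qed
qed measurable

lemma model2_law_eq_density:
  "model2_law mu1s mu2s = density lborel (\<lambda>y. 1/2 * phi_d (y - mu1s) + 1/2 * phi_d (y - mu2s))"
  unfolding model2_law_def by simp

text \<open>The normalising constant of the Gaussian is never computed: integrability of the
  kernel is read off from the mixture being a probability density.\<close>

lemma integrable_gauss_kernel_if_prob_space_model2_law:
  fixes mu1s mu2s :: "real ^ 'n"
  assumes "prob_space (model2_law mu1s mu2s)"
  shows "integrable lborel (gauss_kernel :: real ^ 'n \<Rightarrow> real)"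
proof -
  define f where "f = (\<lambda>y. 1/2 * phi_d (y - mu1s) + 1/2 * phi_d (y - mu2s))"
  have f_pos: "0 < f y" for y unfolding f_def using phi_d_pos[of "y - mu1s"] phi_d_pos[of "y - mu2s"] by simp
  have "integrable (model2_law mu1s mu2s) (\<lambda>_. 1::real)"
    using prob_space.finite_measure[OF assms] by (simp add: finite_measure.integrable_const)
  then have "integrable lborel f"
    using f_pos by (subst (asm) model2_law_eq_density) (simp add: integrable_density f_def less_imp_le)
  then have "integrable lborel (\<lambda>y. 2 * f y)" by simp
  then have "integrable lborel (\<lambda>y. phi_d (y - mu1s))"
    by (rule Bochner_Integration.integrable_bound)
      (auto simp: f_def phi_d_pos less_imp_le intro!: AE_I2)
  then have "integrable lborel (\<lambda>x. phi_d (mu1s + 1 *\<^sub>R x - mu1s))"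
    by (intro integrable_lborel_affine[where g = "\<lambda>y. phi_d (y - mu1s)"]) auto
  then show ?thesis by (simp add: phi_d_eq_gauss_kernel)
qed

lemma model2_law_second_moment:
  fixes mu1s mu2s :: "real ^ 'n"
  assumes "prob_space (model2_law mu1s mu2s)"
  shows "integrable (model2_law mu1s mu2s) (\<lambda>y. (norm y)\<^sup>2)"
proof -
  define K where "K = (2 * pi) powr (- real CARD('n) / 2)"
  note gauss = integrable_gauss_kernel_if_prob_space_model2_law[OF assms]
  have shifted: "integrable lborel (\<lambda>y. (norm y)\<^sup>2 * phi_d (y - m))" for m :: "real ^ 'n"
  proof (rule Bochner_Integration.integrable_bound)
    have "integrable lborel (\<lambda>x. (norm (x - m))\<^sup>2 * gauss_kernel (x - m))"
      using integrable_lborel_affine[OF _ _ integrable_norm_sq_mult_gauss_kernel[OF gauss], of 1 "- m"] by simp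
    moreover have "integrable lborel (\<lambda>x. gauss_kernel (x - m))"
      using integrable_lborel_affine[OF _ _ gauss, of 1 "- m"] by simp
    ultimately have "integrable lborel (\<lambda>x. 2 * ((norm (x - m))\<^sup>2 * gauss_kernel (x - m))
        + 2 * (norm m)\<^sup>2 * gauss_kernel (x - m))"
      by (intro Bochner_Integration.integrable_add integrable_mult_right)
    then have "integrable lborel (\<lambda>x. (2 * (norm (x - m))\<^sup>2 + 2 * (norm m)\<^sup>2) * gauss_kernel (x - m))"
      by (simp add: algebra_simps)
    then show "integrable lborel (\<lambda>x. K * ((2 * (norm (x - m))\<^sup>2 + 2 * (norm m)\<^sup>2) * gauss_kernel (x - m)))"
      by simp
    have "(norm y)\<^sup>2 \<le> 2 * (norm (y - m))\<^sup>2 + 2 * (norm m)\<^sup>2" for y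
    proof -
      have "(norm y)\<^sup>2 \<le> (norm (y - m) + norm m)\<^sup>2"
        using norm_triangle_sub[of y m] by (intro power_mono) auto
      also have "\<dots> \<le> 2 * (norm (y - m))\<^sup>2 + 2 * (norm m)\<^sup>2"
        using zero_le_power2[of "norm (y - m) - norm m"] by (simp add: power2_diff power2_sum)
      finally show ?thesis .
    qed
    then show "AE y in lborel. norm ((norm y)\<^sup>2 * phi_d (y - m))
        \<le> norm (K * ((2 * (norm (y - m))\<^sup>2 + 2 * (norm m)\<^sup>2) * gauss_kernel (y - m)))"
      by (intro AE_I2) (simp add: phi_d_eq_gauss_kernel K_def gauss_kernel_pos less_imp_le mult_right_mono)
  qed measurable
  have "integrable lborel (\<lambda>y. (1/2 * phi_d (y - mu1s) + 1/2 * phi_d (y - mu2s)) * (norm y)\<^sup>2)"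
    using shifted[of mu1s] shifted[of mu2s] by (simp add: algebra_simps)
  then show ?thesis
    unfolding model2_law_eq_density
    by (subst integrable_density) (auto simp: phi_d_pos less_imp_le add_nonneg_nonneg)
qed

lemma samp_em_step_conv_in_prob:
  fixes Y :: "nat \<Rightarrow> 'a \<Rightarrow> real ^ 'n" and P :: "nat \<Rightarrow> 'a \<Rightarrow> (real ^ 'n) \<times> (real ^ 'n)"
  assumes "prob_space M" and Y[measurable]: "\<And>i. Y i \<in> borel_measurable M"
    and indep: "prob_space.indep_vars M (\<lambda>_. borel) Y UNIV"
    and law: "\<And>i. distr M borel (Y i) = model2_law mu1s mu2s"
    and P: "conv_in_prob M P p"
  shows "conv_in_prob M (\<lambda>n \<omega>. samp_em_step n (\<lambda>i. Y i \<omega>) (P n \<omega>)) (pop_em_step mu1s mu2s p)"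
proof -
  have "prob_space (model2_law mu1s mu2s)"
    using prob_space.prob_space_distr[OF \<open>prob_space M\<close> Y[of 0]] law[of 0] by simp
  note weighted_mean = conv_in_prob_weighted_mean[OF assms(1-4) model2_law_second_moment[OF this] P,
      where C = "norm (fst p) + norm (snd p) + 1"]
  have lipschitz: "\<bar>v_d y (fst q) (snd q) - v_d y (fst p) (snd p)\<bar>
      \<le> (2 * norm y + (norm (fst p) + norm (snd p) + 1)) * dist q p" if "dist q p \<le> 1" for y q
    using v_d_lipschitz[of "fst q" "snd q" "fst p" "snd p" y] that by simp
  have "conv_in_prob M (\<lambda>n \<omega>. (
        inverse (\<Sum>i<n. v_d (Y i \<omega>) (fst (P n \<omega>)) (snd (P n \<omega>)))
          *\<^sub>R (\<Sum>i<n. v_d (Y i \<omega>) (fst (P n \<omega>)) (snd (P n \<omega>)) *\<^sub>R Y i \<omega>),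
        inverse (\<Sum>i<n. 1 - v_d (Y i \<omega>) (fst (P n \<omega>)) (snd (P n \<omega>)))
          *\<^sub>R (\<Sum>i<n. (1 - v_d (Y i \<omega>) (fst (P n \<omega>)) (snd (P n \<omega>))) *\<^sub>R Y i \<omega>)))
      (inverse (\<integral>y. v_d y (fst p) (snd p) \<partial>model2_law mu1s mu2s)
          *\<^sub>R (\<integral>y. v_d y (fst p) (snd p) *\<^sub>R y \<partial>model2_law mu1s mu2s),
        inverse (\<integral>y. 1 - v_d y (fst p) (snd p) \<partial>model2_law mu1s mu2s)
          *\<^sub>R (\<integral>y. (1 - v_d y (fst p) (snd p)) *\<^sub>R y \<partial>model2_law mu1s mu2s))"
    using lipschitz
    by (intro conv_in_prob_Pair weighted_mean)
      (auto simp: v_d_pos v_d_less_1 less_imp_le abs_minus_commute)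
  then show ?thesis
    by (simp add: samp_em_step_def pop_em_step_def split_beta)
qed

theorem theorem6:
  fixes M :: "'a measure"
    and Y :: "nat \<Rightarrow> 'a \<Rightarrow> real ^ 'n"
    and mu1s mu2s mu1_0 mu2_0 :: "real ^ 'n"
  assumes "prob_space M"
    and "\<And>i. Y i \<in> borel_measurable M"
    and "prob_space.indep_vars M (\<lambda>_. borel) Y UNIV"
    and "\<And>i. distr M borel (Y i) = model2_law mu1s mu2s"
  shows "\<forall>t. \<forall>\<epsilon>>0.
      ((\<lambda>n. measure M {\<omega> \<in> space M.
          dist (fst (samp_em n (\<lambda>i. Y i \<omega>) (mu1_0, mu2_0) t))
               (fst (pop_em mu1s mu2s (mu1_0, mu2_0) t)) > \<epsilon>}) \<longlonglongrightarrow> 0)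
    \<and> ((\<lambda>n. measure M {\<omega> \<in> space M.
          dist (snd (samp_em n (\<lambda>i. Y i \<omega>) (mu1_0, mu2_0) t))
               (snd (pop_em mu1s mu2s (mu1_0, mu2_0) t)) > \<epsilon>}) \<longlonglongrightarrow> 0)"
proof (intro allI impI conjI)
  fix t and \<epsilon> :: real assume "\<epsilon> > 0"
  have iterates: "conv_in_prob M (\<lambda>n \<omega>. samp_em n (\<lambda>i. Y i \<omega>) (mu1_0, mu2_0) t)
      (pop_em mu1s mu2s (mu1_0, mu2_0) t)"
  proof (induction t)
    case 0
    show ?case by (simp add: samp_em_def pop_em_def conv_in_prob_const)
  next
    case (Suc t)
    then show ?case
      using samp_em_step_conv_in_prob[OF assms] by (simp add: samp_em_def pop_em_def)
  qed
  show "(\<lambda>n. measure M {\<omega> \<in> space M. dist (fst (samp_em n (\<lambda>i. Y i \<omega>) (mu1_0, mu2_0) t))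
      (fst (pop_em mu1s mu2s (mu1_0, mu2_0) t)) > \<epsilon>}) \<longlonglongrightarrow> 0"
    using conv_in_prob_isCont[OF iterates, of fst] \<open>\<epsilon> > 0\<close>
    by (intro conv_in_prob_imp_measure_tendsto[OF prob_space.finite_measure[OF assms(1)]]) (auto intro: continuous_intros)
  show "(\<lambda>n. measure M {\<omega> \<in> space M. dist (snd (samp_em n (\<lambda>i. Y i \<omega>) (mu1_0, mu2_0) t))
      (snd (pop_em mu1s mu2s (mu1_0, mu2_0) t)) > \<epsilon>}) \<longlonglongrightarrow> 0"
    using conv_in_prob_isCont[OF iterates, of snd] \<open>\<epsilon> > 0\<close>
    by (intro conv_in_prob_imp_measure_tendsto[OF prob_space.finite_measure[OF assms(1)]]) (auto intro: continuous_intros)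
qed

end
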